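(* Let $\Omega\subset\mathbb{R}^{4p}\simeq\mathbb{C}^{2p}$ be open. A differentiable function $F:\Omega\to\mathbb{S}$ is q-monogenic in $\Omega$ if and only if $F$ is in $\Omega$ a simultaneous null solution of the four operators $\partial_{\underline z}$, $\partial_{\underline z}^\dagger$, $\partial_{\underline z}^J$ and $\partial_{\underline z}^{\dagger J}$.
   Context: Coordinates on $\mathbb{R}^{4p}$: $(X_1,\dots,X_{4p})=(x_1,y_1,\dots,x_{2p},y_{2p})$, $z_k=x_k+iy_k$, $\partial_{z_k}=\tfrac12(\partial_{x_k}-i\partial_{y_k})$, $\partial_{\bar z_k}=\tfrac12(\partial_{x_k}+i\partial_{y_k})$. $\mathbb{C}_{4p}$ is the complex Clifford algebra generated by $e_1,\dots,e_{4p}$ with $e_\alpha e_\beta+e_\beta e_\alpha=-2\delta_{\alpha\beta}$. Witt basis: $\mathfrak f_k=\tfrac12(-e_{2k-1}+ie_{2k})$, $\mathfrak f_k^\dagger=\tfrac12(e_{2k-1}+ie_{2k})$, $k=1,\dots,2p$. $I=\prod_{k=1}^{2p}\mathfrak f_k\mathfrak f_k^\dagger$, spinor space $\mathbb S=\mathbb C_{4p}I$. Operators (acting by left multiplication on $\mathbb S$-valued functions): $\partial_{\underline z}=\sum_{k=1}^{2p}\mathfrak f_k^\dagger\partial_{z_k}$, $\partial_{\underline z}^\dagger=\sum_{k=1}^{2p}\mathfrak f_k\partial_{\bar z_k}$, $\partial_{\underline z}^J=\sum_{j=1}^p(\mathfrak f_{2j-1}\partial_{z_{2j}}-\mathfrak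 f_{2j}\partial_{z_{2j-1}})$, $\partial_{\underline z}^{\dagger J}=\sum_{j=1}^p(\mathfrak f^\dagger_{2j-1}\partial_{\bar z_{2j}}-\mathfrak f^\dagger_{2j}\partial_{\bar z_{2j-1}})$. Define real linear maps: $\mathbb{I}(e_{2k-1})=e_{2k}$, $\mathbb{I}(e_{2k})=-e_{2k-1}$; for $j=1,\dots,p$: $\mathbb{J}(e_{4j-3})=e_{4j-1}$, $\mathbb{J}(e_{4j-2})=-e_{4j}$, $\mathbb{J}(e_{4j-1})=-e_{4j-3}$, $\mathbb{J}(e_{4j})=e_{4j-2}$; $\mathbb K=\mathbb I\mathbb J$. $\underline\partial=\sum_\alpha e_\alpha\partial_{X_\alpha}$, $\underline\partial_M=\sum_\alpha M(e_\alpha)\partial_{X_\alpha}$ for $M\in\{\mathbb I,\mathbb J,\mathbb K\}$. $F$ is q-monogenic in $\Omega$ if $\underline\partial F=\underline\partial_{\mathbb I}F=\underline\partial_{\mathbb J}F=\underline\partial_{\mathbb K}F=0$ there. *)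

theory Defs
  imports "HOL-Analysis.Analysis"
begin

text \<open>An element of the complex Clifford algebra is represented by its coefficient
  function on basis blades e_A, A a finite set of generator indices (increasing product).\<close>

type_synonym cl = "nat set \<Rightarrow> complex"

definition cl_zero :: cl where "cl_zero = (\<lambda>_. 0)"
definition blade :: "nat set \<Rightarrow> cl" where "blade A = (\<lambda>B. if B = A then 1 else 0)"
definition gen :: "nat \<Rightarrow> cl" where "gen k = blade {k}"
definition cl_add :: "cl \<Rightarrow> cl \<Rightarrow> cl" where "cl_add x y = (\<lambda>A. x A + y A)"
definition cl_scale :: "complex \<Rightarrow> cl \<Rightarrow> cl" where "cl_scale c x = (\<lambda>A. c * x A)"
definition cl_sum :: "('i \<Rightarrow> cl) \<Rightarrow> 'i set \<Rightarrow> cl" where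
  "cl_sum f S = (\<lambda>A. \<Sum>k\<in>S. f k A)"

definition cl_alg :: "nat \<Rightarrow> cl set" where
  "cl_alg n = {x. \<forall>A. x A \<noteq> 0 \<longrightarrow> A \<subseteq> {1..n}}"

text \<open>e_A e_B = (-1)^(#inversions + |A \<inter> B|) e_(A \<triangle> B).\<close>
definition cl_sign :: "nat set \<Rightarrow> nat set \<Rightarrow> complex" where
  "cl_sign A B = (-1) ^ (card {(a,b). a \<in> A \<and> b \<in> B \<and> b < a} + card (A \<inter> B))"

definition cl_mult :: "nat \<Rightarrow> cl \<Rightarrow> cl \<Rightarrow> cl" where
  "cl_mult n x y = (\<lambda>C. \<Sum>A\<in>Pow {1..n}. \<Sum>B\<in>Pow {1..n}.
      if (A - B) \<union> (B - A) = C then cl_sign A B * x A * y B else 0)"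

definition wf :: "nat \<Rightarrow> cl" where
  "wf k = cl_scale (1/2) (cl_add (cl_scale (-1) (gen (2*k-1))) (cl_scale \<i> (gen (2*k))))"
definition wfd :: "nat \<Rightarrow> cl" where
  "wfd k = cl_scale (1/2) (cl_add (gen (2*k-1)) (cl_scale \<i> (gen (2*k))))"

fun Iprod :: "nat \<Rightarrow> nat \<Rightarrow> cl" where
  "Iprod n 0 = blade {}"
| "Iprod n (Suc k) = cl_mult n (Iprod n k) (cl_mult n (wf (Suc k)) (wfd (Suc k)))"

definition spinorI :: "nat \<Rightarrow> cl" where "spinorI p = Iprod (4*p) (2*p)"

definition spinor_space :: "nat \<Rightarrow> cl set" where
  "spinor_space p = {cl_mult (4*p) a (spinorI p) | a. a \<in> cl_alg (4*p)}"

definition vcoef :: "cl \<Rightarrow> nat \<Rightarrow> complex" where "vcoef x m = x {m}"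

definition Iop :: "cl \<Rightarrow> cl" where
  "Iop x = (\<lambda>A. if is_singleton A then
      (let m = the_elem A in if odd m then - vcoef x (m+1) else vcoef x (m-1)) else 0)"

definition Jop :: "cl \<Rightarrow> cl" where
  "Jop x = (\<lambda>A. if is_singleton A then
      (let m = the_elem A in
        if m mod 4 = 1 then - vcoef x (m+2)
        else if m mod 4 = 2 then vcoef x (m+2)
        else if m mod 4 = 3 then vcoef x (m-2)
        else - vcoef x (m-2)) else 0)"

definition Kop :: "cl \<Rightarrow> cl" where "Kop x = Iop (Jop x)"

text \<open>The coordinates X_1..X_{4p} are given by a bijection ix from {1..4p} onto the
  index type of real^'n; X_\<alpha> = x $ ix \<alpha>.  Partial derivatives are taken componentwise.\<close>

definition pdX :: "(nat \<Rightarrow> 'n::finite) \<Rightarrow> (real^'n \<Rightarrow> cl) \<Rightarrow> nat \<Rightarrow> real^'n \<Rightarrow> cl" where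
  "pdX ix F \<alpha> x = (\<lambda>A. frechet_derivative (\<lambda>y. F y A) (at x) (axis (ix \<alpha>) 1))"

definition dz :: "(nat \<Rightarrow> 'n::finite) \<Rightarrow> (real^'n \<Rightarrow> cl) \<Rightarrow> nat \<Rightarrow> real^'n \<Rightarrow> cl" where
  "dz ix F k x = cl_scale (1/2) (cl_add (pdX ix F (2*k-1) x) (cl_scale (-\<i>) (pdX ix F (2*k) x)))"

definition dzb :: "(nat \<Rightarrow> 'n::finite) \<Rightarrow> (real^'n \<Rightarrow> cl) \<Rightarrow> nat \<Rightarrow> real^'n \<Rightarrow> cl" where
  "dzb ix F k x = cl_scale (1/2) (cl_add (pdX ix F (2*k-1) x) (cl_scale \<i> (pdX ix F (2*k) x)))"

definition Dz :: "nat \<Rightarrow> (nat \<Rightarrow> 'n::finite) \<Rightarrow> (real^'n \<Rightarrow> cl) \<Rightarrow> real^'n \<Rightarrow> cl" where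
  "Dz p ix F x = cl_sum (\<lambda>k. cl_mult (4*p) (wfd k) (dz ix F k x)) {1..2*p}"

definition Dz_dag :: "nat \<Rightarrow> (nat \<Rightarrow> 'n::finite) \<Rightarrow> (real^'n \<Rightarrow> cl) \<Rightarrow> real^'n \<Rightarrow> cl" where
  "Dz_dag p ix F x = cl_sum (\<lambda>k. cl_mult (4*p) (wf k) (dzb ix F k x)) {1..2*p}"

definition Dz_J :: "nat \<Rightarrow> (nat \<Rightarrow> 'n::finite) \<Rightarrow> (real^'n \<Rightarrow> cl) \<Rightarrow> real^'n \<Rightarrow> cl" where
  "Dz_J p ix F x = cl_sum (\<lambda>j. cl_add (cl_mult (4*p) (wf (2*j-1)) (dz ix F (2*j) x))
        (cl_scale (-1) (cl_mult (4*p) (wf (2*j)) (dz ix F (2*j-1) x)))) {1..p}"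

definition Dz_dag_J :: "nat \<Rightarrow> (nat \<Rightarrow> 'n::finite) \<Rightarrow> (real^'n \<Rightarrow> cl) \<Rightarrow> real^'n \<Rightarrow> cl" where
  "Dz_dag_J p ix F x = cl_sum (\<lambda>j. cl_add (cl_mult (4*p) (wfd (2*j-1)) (dzb ix F (2*j) x))
        (cl_scale (-1) (cl_mult (4*p) (wfd (2*j)) (dzb ix F (2*j-1) x)))) {1..p}"

definition dirac :: "nat \<Rightarrow> (nat \<Rightarrow> 'n::finite) \<Rightarrow> (cl \<Rightarrow> cl) \<Rightarrow> (real^'n \<Rightarrow> cl) \<Rightarrow> real^'n \<Rightarrow> cl" where
  "dirac p ix M F x = cl_sum (\<lambda>\<alpha>. cl_mult (4*p) (M (gen \<alpha>)) (pdX ix F \<alpha> x)) {1..4*p}"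

definition q_monogenic :: "nat \<Rightarrow> (nat \<Rightarrow> 'n::finite) \<Rightarrow> (real^'n) set \<Rightarrow> (real^'n \<Rightarrow> cl) \<Rightarrow> bool" where
  "q_monogenic p ix \<Omega> F \<longleftrightarrow> (\<forall>x\<in>\<Omega>.
      dirac p ix id F x = cl_zero \<and> dirac p ix Iop F x = cl_zero \<and>
      dirac p ix Jop F x = cl_zero \<and> dirac p ix Kop F x = cl_zero)"

end

theory Submission
  imports Defs
begin

text \<open>Writing the generators in the Witt basis, \<open>e\<^sub>2\<^sub>k\<^sub>-\<^sub>1 = f\<^sub>k\<^sup>\<dagger> - f\<^sub>k\<close> and
  \<open>e\<^sub>2\<^sub>k = -i (f\<^sub>k + f\<^sub>k\<^sup>\<dagger>)\<close>, and the real partial derivatives through the Wirtinger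
  derivatives, one finds at every point, for every function,
  \<open>\<partial> = 2 (\<partial>\<^sub>z - \<partial>\<^sub>z\<^sup>\<dagger>)\<close>, \<open>\<partial>\<^sub>I = -2i (\<partial>\<^sub>z + \<partial>\<^sub>z\<^sup>\<dagger>)\<close>,
  \<open>\<partial>\<^sub>J = 2 (\<partial>\<^sub>z\<^sup>J - \<partial>\<^sub>z\<^sup>\<dagger>\<^sup>J)\<close> and \<open>\<partial>\<^sub>K = 2i (\<partial>\<^sub>z\<^sup>J + \<partial>\<^sub>z\<^sup>\<dagger>\<^sup>J)\<close>.
  Both pairs of linear combinations are invertible, so the two systems of operators have the
  same null solutions.  The identities are pointwise and purely algebraic.\<close>

lemma sum_lessThan_double:
  fixes f :: "nat \<Rightarrow> 'a::comm_monoid_add"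
  shows "(\<Sum>i<2*m. f i) = (\<Sum>i<m. f (2*i) + f (2*i+1))"
  by (induction m) (simp_all add: algebra_simps)

lemma sum_atLeast1_atMost_double:
  fixes g :: "nat \<Rightarrow> 'a::comm_monoid_add"
  shows "(\<Sum>a\<in>{1..2*m}. g a) = (\<Sum>i<m. g (2*i+1) + g (2*i+2))"
  by (simp add: sum.atLeast1_atMost_eq sum_lessThan_double)

lemma sum_atLeast1_atMost_quadruple:
  fixes g :: "nat \<Rightarrow> 'a::comm_monoid_add"
  shows "(\<Sum>a\<in>{1..4*m}. g a) = (\<Sum>i<m. g (4*i+1) + g (4*i+2) + g (4*i+3) + g (4*i+4))"
proof -
  have "(\<Sum>a\<in>{1..4*m}. g a) = (\<Sum>k<2*m. g (2*k+1) + g (2*k+2))"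
    using sum_atLeast1_atMost_double[of g "2*m"] by simp
  also have "\<dots> = (\<Sum>i<m. g (4*i+1) + g (4*i+2) + g (4*i+3) + g (4*i+4))"
    by (subst sum_lessThan_double) (simp add: add.assoc eval_nat_numeral)
  finally show ?thesis .
qed

lemma cl_add_apply [simp]: "cl_add x y A = x A + y A"
  by (simp add: cl_add_def)

lemma cl_scale_apply [simp]: "cl_scale c x A = c * x A"
  by (simp add: cl_scale_def)

lemma cl_sum_apply [simp]: "cl_sum f S A = (\<Sum>k\<in>S. f k A)"
  by (simp add: cl_sum_def)

lemma cl_mult_add_left [simp]: "cl_mult n (cl_add a b) y C = cl_mult n a y C + cl_mult n b y C"
  unfolding cl_mult_def by (simp add: sum.distrib[symmetric] algebra_simps if_distrib cong: if_cong)

lemma cl_mult_add_right [simp]: "cl_mult n y (cl_add a b) C = cl_mult n y a C + cl_mult n y b C"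
  unfolding cl_mult_def by (simp add: sum.distrib[symmetric] algebra_simps if_distrib cong: if_cong)

lemma cl_mult_scale_left [simp]: "cl_mult n (cl_scale c a) y C = c * cl_mult n a y C"
  unfolding cl_mult_def by (simp add: sum_distrib_left algebra_simps if_distrib cong: if_cong)

lemma cl_mult_scale_right [simp]: "cl_mult n y (cl_scale c a) C = c * cl_mult n y a C"
  unfolding cl_mult_def by (simp add: sum_distrib_left algebra_simps if_distrib cong: if_cong)

lemma cl_eq_by_singletons:
  assumes "\<And>m. x {m} = y {m}" and "\<And>A. \<not> is_singleton A \<Longrightarrow> x A = y A"
  shows "x = y"
  using assms by (metis is_singletonE ext)

lemma gen_singleton: "gen a {m} = (if m = a then 1 else 0)"
  by (simp add: gen_def blade_def)

lemma gen_non_singleton: "\<not> is_singleton A \<Longrightarrow> gen a A = 0"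
  by (auto simp: gen_def blade_def)

lemma Iop_non_singleton: "\<not> is_singleton A \<Longrightarrow> Iop x A = 0"
  by (simp add: Iop_def)

lemma Jop_non_singleton: "\<not> is_singleton A \<Longrightarrow> Jop x A = 0"
  by (simp add: Jop_def)

lemma Iop_singleton:
  shows "odd m \<Longrightarrow> Iop x {m} = - x {m + 1}"
    and "even m \<Longrightarrow> Iop x {m} = x {m - 1}"
  by (simp_all add: Iop_def vcoef_def)

lemma Jop_singleton:
  shows "m mod 4 = 1 \<Longrightarrow> Jop x {m} = - x {m + 2}"
    and "m mod 4 = 2 \<Longrightarrow> Jop x {m} = x {m + 2}"
    and "m mod 4 = 3 \<Longrightarrow> Jop x {m} = x {m - 2}"
    and "m mod 4 = 0 \<Longrightarrow> Jop x {m} = - x {m - 2}"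
  by (simp_all add: Jop_def vcoef_def)

lemma Iop_scale: "Iop (cl_scale c x) = cl_scale c (Iop x)"
  by (simp add: fun_eq_iff Iop_def vcoef_def Let_def)

lemma Iop_gen_odd:
  assumes "odd a"
  shows "Iop (gen a) = gen (a + 1)"
proof (rule cl_eq_by_singletons)
  show "Iop (gen a) {m} = gen (a + 1) {m}" for m
    using assms by (cases "even m"; simp add: Iop_singleton gen_singleton; presburger)
qed (simp add: Iop_non_singleton gen_non_singleton)

lemma Iop_gen_even:
  assumes "even a" and "a \<noteq> 0"
  shows "Iop (gen a) = cl_scale (-1) (gen (a - 1))"
proof (rule cl_eq_by_singletons)
  show "Iop (gen a) {m} = cl_scale (-1) (gen (a - 1)) {m}" for m
    using assms by (cases "even m"; simp add: Iop_singleton gen_singleton; presburger)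
qed (simp add: Iop_non_singleton gen_non_singleton)

lemma Jop_gen_4_1: "Jop (gen (4*i+1)) = gen (4*i+3)"
proof (rule cl_eq_by_singletons)
  show "Jop (gen (4*i+1)) {m} = gen (4*i+3) {m}" for m
    using mod_exhaust_less_4[of m] by (auto simp: Jop_singleton gen_singleton; presburger)
qed (simp add: Jop_non_singleton gen_non_singleton)

lemma Jop_gen_4_2: "Jop (gen (4*i+2)) = cl_scale (-1) (gen (4*i+4))"
proof (rule cl_eq_by_singletons)
  show "Jop (gen (4*i+2)) {m} = cl_scale (-1) (gen (4*i+4)) {m}" for m
    using mod_exhaust_less_4[of m] by (auto simp: Jop_singleton gen_singleton; presburger)
qed (simp add: Jop_non_singleton gen_non_singleton)

lemma Jop_gen_4_3: "Jop (gen (4*i+3)) = cl_scale (-1) (gen (4*i+1))"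
proof (rule cl_eq_by_singletons)
  show "Jop (gen (4*i+3)) {m} = cl_scale (-1) (gen (4*i+1)) {m}" for m
    using mod_exhaust_less_4[of m] by (auto simp: Jop_singleton gen_singleton; presburger)
qed (simp add: Jop_non_singleton gen_non_singleton)

lemma Jop_gen_4_4: "Jop (gen (4*i+4)) = gen (4*i+2)"
proof (rule cl_eq_by_singletons)
  show "Jop (gen (4*i+4)) {m} = gen (4*i+2) {m}" for m
    using mod_exhaust_less_4[of m] by (auto simp: Jop_singleton gen_singleton; presburger)
qed (simp add: Jop_non_singleton gen_non_singleton)

lemma Kop_gen_4_1: "Kop (gen (4*i+1)) = gen (4*i+4)"
  unfolding Kop_def Jop_gen_4_1 by (simp add: Iop_gen_odd add.commute)

lemma Kop_gen_4_2: "Kop (gen (4*i+2)) = gen (4*i+3)"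
  unfolding Kop_def Jop_gen_4_2 by (simp add: Iop_scale Iop_gen_even fun_eq_iff add.commute)

lemma Kop_gen_4_3: "Kop (gen (4*i+3)) = cl_scale (-1) (gen (4*i+2))"
  unfolding Kop_def Jop_gen_4_3 by (simp add: Iop_scale Iop_gen_odd)

lemma Kop_gen_4_4: "Kop (gen (4*i+4)) = cl_scale (-1) (gen (4*i+1))"
  unfolding Kop_def Jop_gen_4_4 by (simp add: Iop_gen_even)

lemma dirac_pairs:
  "dirac p ix M F x C = (\<Sum>i<2*p. cl_mult (4*p) (M (gen (2*i+1))) (pdX ix F (2*i+1) x) C
      + cl_mult (4*p) (M (gen (2*i+2))) (pdX ix F (2*i+2) x) C)"
  using sum_atLeast1_atMost_double[of _ "2*p"] by (simp add: dirac_def)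

lemma dirac_quadruples:
  "dirac p ix M F x C = (\<Sum>i<p. cl_mult (4*p) (M (gen (4*i+1))) (pdX ix F (4*i+1) x) C
      + cl_mult (4*p) (M (gen (4*i+2))) (pdX ix F (4*i+2) x) C
      + cl_mult (4*p) (M (gen (4*i+3))) (pdX ix F (4*i+3) x) C
      + cl_mult (4*p) (M (gen (4*i+4))) (pdX ix F (4*i+4) x) C)"
  unfolding dirac_def cl_sum_apply sum_atLeast1_atMost_quadruple ..

lemma dirac_id_eq: "dirac p ix id F x C = 2 * (Dz p ix F x C - Dz_dag p ix F x C)"
  by (simp add: dirac_pairs Dz_def Dz_dag_def sum.atLeast1_atMost_eq sum_subtractf[symmetric]
      sum_distrib_left wf_def wfd_def dz_def dzb_def algebra_simps)

lemma dirac_Iop_eq: "dirac p ix Iop F x C = -2 * \<i> * (Dz p ix F x C + Dz_dag p ix F x C)"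
proof -
  have "dirac p ix Iop F x C = (\<Sum>i<2*p. cl_mult (4*p) (gen (2*i+2)) (pdX ix F (2*i+1) x) C
      - cl_mult (4*p) (gen (2*i+1)) (pdX ix F (2*i+2) x) C)"
    by (simp add: dirac_pairs Iop_gen_odd Iop_gen_even)
  also have "\<dots> = -2 * \<i> * (Dz p ix F x C + Dz_dag p ix F x C)"
    by (simp add: Dz_def Dz_dag_def sum.atLeast1_atMost_eq sum.distrib[symmetric] sum_distrib_left
        wf_def wfd_def dz_def dzb_def algebra_simps)
  finally show ?thesis .
qed

lemma dirac_Jop_eq: "dirac p ix Jop F x C = 2 * (Dz_J p ix F x C - Dz_dag_J p ix F x C)"
proof -
  have "dirac p ix Jop F x C = (\<Sum>i<p. cl_mult (4*p) (gen (4*i+3)) (pdX ix F (4*i+1) x) C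
      - cl_mult (4*p) (gen (4*i+4)) (pdX ix F (4*i+2) x) C
      - cl_mult (4*p) (gen (4*i+1)) (pdX ix F (4*i+3) x) C
      + cl_mult (4*p) (gen (4*i+2)) (pdX ix F (4*i+4) x) C)"
    unfolding dirac_quadruples Jop_gen_4_1 Jop_gen_4_2 Jop_gen_4_3 Jop_gen_4_4 by simp
  also have "\<dots> = 2 * (Dz_J p ix F x C - Dz_dag_J p ix F x C)"
    by (simp add: Dz_J_def Dz_dag_J_def sum.atLeast1_atMost_eq sum_subtractf[symmetric]
        sum_distrib_left wf_def wfd_def dz_def dzb_def algebra_simps)
  finally show ?thesis .
qed

lemma dirac_Kop_eq: "dirac p ix Kop F x C = 2 * \<i> * (Dz_J p ix F x C + Dz_dag_J p ix F x C)"
proof -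
  have "dirac p ix Kop F x C = (\<Sum>i<p. cl_mult (4*p) (gen (4*i+4)) (pdX ix F (4*i+1) x) C
      + cl_mult (4*p) (gen (4*i+3)) (pdX ix F (4*i+2) x) C
      - cl_mult (4*p) (gen (4*i+2)) (pdX ix F (4*i+3) x) C
      - cl_mult (4*p) (gen (4*i+1)) (pdX ix F (4*i+4) x) C)"
    unfolding dirac_quadruples Kop_gen_4_1 Kop_gen_4_2 Kop_gen_4_3 Kop_gen_4_4 by simp
  also have "\<dots> = 2 * \<i> * (Dz_J p ix F x C + Dz_dag_J p ix F x C)"
    by (simp add: Dz_J_def Dz_dag_J_def sum.atLeast1_atMost_eq sum.distrib[symmetric]
        sum_distrib_left wf_def wfd_def dz_def dzb_def algebra_simps)
  finally show ?thesis .
qed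

lemma cl_zero_iff: "x = cl_zero \<longleftrightarrow> (\<forall>C. x C = 0)"
  by (auto simp: cl_zero_def)

theorem proposition2:
  fixes p :: nat and ix :: "nat \<Rightarrow> 'n::finite" and \<Omega> :: "(real^'n) set"
    and F :: "real^'n \<Rightarrow> cl"
  assumes "bij_betw ix {1..4*p} UNIV"
    and "open \<Omega>"
    and "\<forall>x\<in>\<Omega>. \<forall>A. (\<lambda>y. F y A) differentiable (at x)"
    and "\<forall>x\<in>\<Omega>. F x \<in> spinor_space p"
  shows "q_monogenic p ix \<Omega> F \<longleftrightarrow>
    (\<forall>x\<in>\<Omega>. Dz p ix F x = cl_zero \<and> Dz_dag p ix F x = cl_zero \<and>
             Dz_J p ix F x = cl_zero \<and> Dz_dag_J p ix F x = cl_zero)"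
proof -
  have Dz_pair: "2 * (u - v) = 0 \<and> -2 * \<i> * (u + v) = 0 \<longleftrightarrow> u = 0 \<and> v = 0"
    and Dz_J_pair: "2 * (u - v) = 0 \<and> 2 * \<i> * (u + v) = 0 \<longleftrightarrow> u = 0 \<and> v = 0"
    for u v :: complex
    by (auto simp: eq_neg_iff_add_eq_0)
  have pairs: "dirac p ix id F x = cl_zero \<and> dirac p ix Iop F x = cl_zero \<longleftrightarrow>
      Dz p ix F x = cl_zero \<and> Dz_dag p ix F x = cl_zero"
    "dirac p ix Jop F x = cl_zero \<and> dirac p ix Kop F x = cl_zero \<longleftrightarrow>
      Dz_J p ix F x = cl_zero \<and> Dz_dag_J p ix F x = cl_zero" for x
    unfolding cl_zero_iff dirac_id_eq dirac_Iop_eq dirac_Jop_eq dirac_Kop_eq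
      all_conj_distrib[symmetric] Dz_pair Dz_J_pair by (rule refl)+
  have "dirac p ix id F x = cl_zero \<and> dirac p ix Iop F x = cl_zero \<and>
      dirac p ix Jop F x = cl_zero \<and> dirac p ix Kop F x = cl_zero \<longleftrightarrow>
      Dz p ix F x = cl_zero \<and> Dz_dag p ix F x = cl_zero \<and>
      Dz_J p ix F x = cl_zero \<and> Dz_dag_J p ix F x = cl_zero" for x
    using pairs[of x] by blast
  then show ?thesis
    unfolding q_monogenic_def by simp
qed

end
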